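(* Let $\mathcal{A}$ be a finite set of positive integers, let $w \leqslant z$ be real numbers, and let $m_1, m_2$ be real numbers with $(m_1, m_2) \in \mathcal{U}$. Then $$ S(\mathcal{A}, z) \leqslant S(\mathcal{A}, w) - \frac{m_1 + m_2 - 1}{m_1 m_2} \sum_{w \leqslant p_1 < z} S(\mathcal{A}_{p_1}, w) + \frac{2}{m_1 m_2} \sum_{w \leqslant p_2 < p_1 < z} S(\mathcal{A}_{p_1 p_2}, w). $$
   Context: Throughout, $p, p_1, p_2, \dots$ denote prime numbers. For a finite set $\mathcal{A}$ of positive integers and a positive integer $d$, $\mathcal{A}_d = \{a : ad \in \mathcal{A}\}$. For real $z$, $S(\mathcal{A}, z)$ denotes the number of $a \in \mathcal{A}$ having no prime factor less than $z$. Let $T = (0,1] \cup [2,3] \cup [4,5] \cup \cdots$, i.e. $T$ is the union of $(0,1]$ and the intervals $[k-1,k]$ over all odd integers $k \geqslant 3$, and let $\mathcal{U} = \{(x_1, x_2) : x_1, x_2 \in T,\ |x_1 - x_2| \leqslant 1\}$. *)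

theory Defs
  imports Complex_Main "HOL-Computational_Algebra.Primes"
begin

definition sieve_sub :: "nat set \<Rightarrow> nat \<Rightarrow> nat set" where
  "sieve_sub A d = {a. a * d \<in> A}"

definition sift :: "nat set \<Rightarrow> real \<Rightarrow> nat" where
  "sift A z = card {a \<in> A. \<forall>p. prime p \<and> real p < z \<longrightarrow> \<not> p dvd a}"

text \<open>T = (0,1] \<union> [2,3] \<union> [4,5] \<union> ...\<close>
definition T_set :: "real set" where
  "T_set = {x. 0 < x \<and> x \<le> 1} \<union>
           {x. \<exists>k::nat. odd k \<and> 3 \<le> k \<and> real k - 1 \<le> x \<and> x \<le> real k}"

definition U_set :: "(real \<times> real) set" where
  "U_set = {(x1, x2). x1 \<in> T_set \<and> x2 \<in> T_set \<and> \<bar>x1 - x2\<bar> \<le> 1}"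

end

theory Submission
  imports Defs
begin

text \<open>For a \<open>w\<close>-rough \<open>a \<in> A\<close> let \<open>n(a)\<close> be the number of primes \<open>p \<in> [w, z)\<close> dividing \<open>a\<close>.
  Then \<open>a\<close> is counted by \<open>S(A, z)\<close> iff \<open>n(a) = 0\<close>, and by double counting it contributes
  \<open>n(a)\<close> to the sum over \<open>p\<^sub>1\<close> and \<open>n(a)(n(a) - 1)/2\<close> to the sum over pairs. So it suffices
  that \<open>[n = 0] \<le> (n - m\<^sub>1)(n - m\<^sub>2)/(m\<^sub>1 m\<^sub>2)\<close> for every natural \<open>n\<close>, which holds because
  two points of \<open>T\<close> at distance at most 1 never have an integer strictly between them.\<close>

definition rough :: "real \<Rightarrow> nat \<Rightarrow> bool" where
  "rough w a \<longleftrightarrow> (\<forall>p. prime p \<and> real p < w \<longrightarrow> \<not> p dvd a)"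

lemma sift_eq_card_rough: "sift A w = card {a \<in> A. rough w a}"
  by (simp add: sift_def rough_def)

lemma rough_iff_rough_and_no_prime_divisor_between:
  assumes "w \<le> z"
  shows "rough z a \<longleftrightarrow> rough w a \<and> (\<forall>p. prime p \<and> w \<le> real p \<and> real p < z \<longrightarrow> \<not> p dvd a)"
  unfolding rough_def using assms by (meson not_le order_less_le_trans)

lemma rough_mult_iff:
  assumes "\<And>q. prime q \<Longrightarrow> q dvd d \<Longrightarrow> w \<le> real q"
  shows "rough w (b * d) \<longleftrightarrow> rough w b"
proof -
  have "\<not> p dvd d" if "prime p" and "real p < w" for p
    using assms[of p] that by (meson not_less)
  then show ?thesis
    unfolding rough_def by (auto simp: prime_dvd_mult_iff)
qed

lemma sift_sieve_sub:
  assumes "d > 0" and "\<And>q. prime q \<Longrightarrow> q dvd d \<Longrightarrow> w \<le> real q"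
  shows "sift (sieve_sub A d) w = card {a \<in> A. rough w a \<and> d dvd a}"
proof -
  have "bij_betw (\<lambda>b. b * d) {b \<in> sieve_sub A d. rough w b} {a \<in> A. rough w a \<and> d dvd a}"
  proof (rule bij_betw_imageI)
    show "inj_on (\<lambda>b. b * d) {b \<in> sieve_sub A d. rough w b}"
      using assms(1) by (simp add: inj_on_def)
    show "(\<lambda>b. b * d) ` {b \<in> sieve_sub A d. rough w b} = {a \<in> A. rough w a \<and> d dvd a}"
      using rough_mult_iff[of d w, OF assms(2)]
      by (auto simp: sieve_sub_def image_iff mult.commute elim!: dvdE)
  qed
  then show ?thesis
    by (simp add: sift_eq_card_rough bij_betw_same_card)
qed

lemma sum_card_filter_swap:
  assumes "finite I" and "finite S"
  shows "(\<Sum>i\<in>I. card {a \<in> S. R i a}) = (\<Sum>a\<in>S. card {i \<in> I. R i a})"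
proof -
  have card_eq: "card {x \<in> X. P x} = (\<Sum>x\<in>X. of_bool (P x))" if "finite X" for X and P :: "'c \<Rightarrow> bool"
    using that by (simp add: Collect_conj_eq Int_commute)
  show ?thesis
    using assms by (simp only: card_eq sum.swap[of _ I S])
qed

lemma sum_sift_sieve_sub:
  fixes f :: "'i \<Rightarrow> nat"
  assumes "finite A" and "finite I"
    and "\<And>i. i \<in> I \<Longrightarrow> f i > 0"
    and "\<And>i q. i \<in> I \<Longrightarrow> prime q \<Longrightarrow> q dvd f i \<Longrightarrow> w \<le> real q"
  shows "(\<Sum>i\<in>I. sift (sieve_sub A (f i)) w) = (\<Sum>a\<in>{a \<in> A. rough w a}. card {i \<in> I. f i dvd a})"
proof -
  have "(\<Sum>i\<in>I. sift (sieve_sub A (f i)) w) = (\<Sum>i\<in>I. card {a \<in> {a \<in> A. rough w a}. f i dvd a})"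
    using assms(3,4) by (intro sum.cong) (simp_all add: sift_sieve_sub conj_assoc)
  also have "\<dots> = (\<Sum>a\<in>{a \<in> A. rough w a}. card {i \<in> I. f i dvd a})"
    using assms(1,2) by (intro sum_card_filter_swap) simp_all
  finally show ?thesis .
qed

lemma card_ordered_pairs:
  fixes S :: "'a::linorder set"
  assumes "finite S"
  shows "real (card {(x, y). x \<in> S \<and> y \<in> S \<and> y < x}) = real (card S) * (real (card S) - 1) / 2"
proof -
  define L where "L = {(x, y). x \<in> S \<and> y \<in> S \<and> y < x}"
  have finL: "finite L"
    using assms unfolding L_def by (auto intro: finite_subset[of _ "S \<times> S"])
  have "S \<times> S = (L \<union> prod.swap ` L) \<union> (\<lambda>x. (x, x)) ` S"
    unfolding L_def by (auto simp: image_iff; metis neq_iff)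
  moreover have "L \<inter> prod.swap ` L = {}" "(L \<union> prod.swap ` L) \<inter> (\<lambda>x. (x, x)) ` S = {}"
    by (auto simp: L_def)
  ultimately have "card (S \<times> S) = card L + card (prod.swap ` L) + card ((\<lambda>x. (x, x)) ` S)"
    using assms finL by (simp add: card_Un_disjoint)
  also have "\<dots> = 2 * card L + card S"
    by (simp add: card_image inj_on_convol_ident)
  finally have "real (card S) * real (card S) = 2 * real (card L) + real (card S)"
    unfolding card_cartesian_product by (metis of_nat_add of_nat_mult of_nat_numeral)
  then show ?thesis
    unfolding L_def[symmetric] by (simp add: algebra_simps)
qed

lemma finite_nat_less_real: "finite {n :: nat. real n < z}"
proof (rule finite_subset)
  show "{n :: nat. real n < z} \<subseteq> {..nat \<lceil>z\<rceil>}"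
    by (auto simp: le_nat_iff) (metis ceiling_mono ceiling_of_nat less_imp_le)
qed simp

lemma T_set_odd_interval:
  assumes "x \<in> T_set"
  obtains k :: nat where "odd k" "real k - 1 \<le> x" "x \<le> real k"
proof (cases "x \<le> 1")
  case True
  then show ?thesis using assms that[of 1] by (auto simp: T_set_def)
next
  case False
  then show ?thesis using assms that by (auto simp: T_set_def)
qed

lemma T_set_gap:
  assumes "x \<in> T_set" and "y \<in> T_set" and "x < of_int n" and "of_int n < y"
  shows "1 < y - x"
proof (rule ccontr)
  assume "\<not> 1 < y - x"
  obtain k :: nat where k: "odd k" "real k - 1 \<le> x" "x \<le> real k"
    using assms(1) by (rule T_set_odd_interval)
  obtain j :: nat where j: "odd j" "real j - 1 \<le> y" "y \<le> real j"
    using assms(2) by (rule T_set_odd_interval)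
  have "n = int k"
    using k assms(3,4) \<open>\<not> 1 < y - x\<close> by linarith
  moreover have "n < int j"
    using j assms(4) by linarith
  ultimately have "k + 2 \<le> j"
    using k(1) j(1) by presburger
  moreover have "x < real k"
    using assms(3) \<open>n = int k\<close> by simp
  ultimately show False
    using j(2) \<open>\<not> 1 < y - x\<close> by linarith
qed

lemma U_set_pos:
  assumes "(m1, m2) \<in> U_set"
  shows "0 < m1" and "0 < m2"
  using assms by (auto simp: U_set_def T_set_def)

lemma U_set_integer_not_between:
  assumes "(m1, m2) \<in> U_set"
  shows "0 \<le> (of_int n - m1) * (of_int n - m2)"
proof (rule ccontr)
  assume "\<not> ?thesis"
  then have "m1 < of_int n \<and> of_int n < m2 \<or> m2 < of_int n \<and> of_int n < m1"
    by (smt (verit) mult_nonneg_nonneg mult_nonpos_nonpos)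
  with assms show False
    using T_set_gap[of m1 m2 n] T_set_gap[of m2 m1 n] by (auto simp: U_set_def)
qed

lemma U_set_sieve_weight:
  assumes "(m1, m2) \<in> U_set"
  shows "of_bool (n = 0) \<le> 1 - (m1 + m2 - 1) / (m1 * m2) * real n
           + 2 / (m1 * m2) * (real n * (real n - 1) / 2)"
proof -
  have "0 < m1" "0 < m2"
    using U_set_pos[OF assms] by simp_all
  then have weight_eq: "1 - (m1 + m2 - 1) / (m1 * m2) * real n + 2 / (m1 * m2) * (real n * (real n - 1) / 2)
      = (real n - m1) * (real n - m2) / (m1 * m2)"
    by (simp add: field_simps)
  have "0 \<le> (real n - m1) * (real n - m2)"
    using U_set_integer_not_between[OF assms, of "int n"] by simp
  then show ?thesis
    unfolding weight_eq using \<open>0 < m1\<close> \<open>0 < m2\<close> by auto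
qed

lemma U_set_sieve_weight_sum:
  assumes "(m1, m2) \<in> U_set"
  shows "(\<Sum>a\<in>R. of_bool (n a = 0)) \<le> real (card R)
           - (m1 + m2 - 1) / (m1 * m2) * (\<Sum>a\<in>R. real (n a))
           + 2 / (m1 * m2) * (\<Sum>a\<in>R. real (n a) * (real (n a) - 1) / 2)"
proof -
  have "(\<Sum>a\<in>R. of_bool (n a = 0)) \<le> (\<Sum>a\<in>R. 1 - (m1 + m2 - 1) / (m1 * m2) * real (n a)
                     + 2 / (m1 * m2) * (real (n a) * (real (n a) - 1) / 2))"
    by (intro sum_mono U_set_sieve_weight assms)
  then show ?thesis
    by (simp add: sum.distrib sum_subtractf sum_distrib_left)
qed

lemma distinct_primes_mult_dvd_iff:
  fixes p q :: nat
  assumes "prime p" and "prime q" and "p \<noteq> q"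
  shows "p * q dvd a \<longleftrightarrow> p dvd a \<and> q dvd a"
  using assms by (auto intro: divides_mult primes_coprime dvd_mult_left dvd_mult_right)

lemma sum_sift_sieve_sub_primes:
  assumes "finite A" and "finite P" and "\<And>p. p \<in> P \<Longrightarrow> prime p \<and> w \<le> real p"
  shows "(\<Sum>p\<in>P. real (sift (sieve_sub A p) w)) = (\<Sum>a\<in>{a \<in> A. rough w a}. real (card {p \<in> P. p dvd a}))"
proof -
  have "w \<le> real q" if "p \<in> P" and "prime q" and "q dvd p" for p q
    using assms(3)[OF that(1)] that(2,3) by (metis primes_dvd_imp_eq)
  then have "(\<Sum>p\<in>P. sift (sieve_sub A p) w) = (\<Sum>a\<in>{a \<in> A. rough w a}. card {p \<in> P. p dvd a})"
    using sum_sift_sieve_sub[of A P id w] assms by (simp add: prime_gt_0_nat)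
  then show ?thesis
    by (simp flip: of_nat_sum)
qed

lemma sum_sift_sieve_sub_prime_pairs:
  assumes "finite A" and "finite P" and "\<And>p. p \<in> P \<Longrightarrow> prime p \<and> w \<le> real p"
  shows "(\<Sum>(p1, p2)\<in>{(p1, p2). p1 \<in> P \<and> p2 \<in> P \<and> p2 < p1}. real (sift (sieve_sub A (p1 * p2)) w))
    = (\<Sum>a\<in>{a \<in> A. rough w a}. real (card {p \<in> P. p dvd a}) * (real (card {p \<in> P. p dvd a}) - 1) / 2)"
proof -
  define Q where "Q = {(p1, p2). p1 \<in> P \<and> p2 \<in> P \<and> p2 < p1}"
  have "finite Q"
    using assms(2) unfolding Q_def by (auto intro: finite_subset[of _ "P \<times> P"])
  have "(\<Sum>q\<in>Q. sift (sieve_sub A (fst q * snd q)) w)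
      = (\<Sum>a\<in>{a \<in> A. rough w a}. card {q \<in> Q. fst q * snd q dvd a})"
  proof (rule sum_sift_sieve_sub[OF assms(1) \<open>finite Q\<close>])
    fix q r
    assume "q \<in> Q" and "prime r" and "r dvd fst q * snd q"
    then show "w \<le> real r"
      using assms(3) by (auto simp: Q_def prime_dvd_mult_iff) (metis primes_dvd_imp_eq)+
  qed (use assms(3) in \<open>auto simp: Q_def prime_gt_0_nat\<close>)
  then have "(\<Sum>(p1, p2)\<in>Q. real (sift (sieve_sub A (p1 * p2)) w))
      = (\<Sum>a\<in>{a \<in> A. rough w a}. real (card {q \<in> Q. fst q * snd q dvd a}))"
    unfolding split_def by (simp only: flip: of_nat_sum)
  moreover have "{q \<in> Q. fst q * snd q dvd a}
      = {(p1, p2). p1 \<in> {p \<in> P. p dvd a} \<and> p2 \<in> {p \<in> P. p dvd a} \<and> p2 < p1}" for a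
    using assms(3) by (auto simp: Q_def distinct_primes_mult_dvd_iff)
  moreover have "finite {p \<in> P. p dvd a}" for a
    using assms(2) by simp
  ultimately show ?thesis
    unfolding Q_def[symmetric] by (simp only: card_ordered_pairs)
qed

lemma finite_primes_between: "finite {p. prime p \<and> w \<le> real p \<and> real p < z}"
  by (rule finite_subset[OF _ finite_nat_less_real[of z]]) auto

theorem theorem2:
  fixes A :: "nat set" and w z m1 m2 :: real
  assumes "finite A" and "\<forall>a\<in>A. 0 < a"
    and "w \<le> z"
    and "(m1, m2) \<in> U_set"
  shows "real (sift A z) \<le> real (sift A w)
     - (m1 + m2 - 1) / (m1 * m2) *
         (\<Sum>p1\<in>{p. prime p \<and> w \<le> real p \<and> real p < z}. real (sift (sieve_sub A p1) w))
     + 2 / (m1 * m2) *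
         (\<Sum>(p1, p2)\<in>{(p1, p2). prime p1 \<and> prime p2 \<and> w \<le> real p2 \<and> p2 < p1 \<and> real p1 < z}.
              real (sift (sieve_sub A (p1 * p2)) w))"
proof -
  define P where "P = {p. prime p \<and> w \<le> real p \<and> real p < z}"
  define R where "R = {a \<in> A. rough w a}"
  define N where "N a = card {p \<in> P. p dvd a}" for a
  have "finite P" "finite R"
    using finite_primes_between assms(1) by (simp_all add: P_def R_def)
  have prime_P: "\<And>p. p \<in> P \<Longrightarrow> prime p \<and> w \<le> real p"
    by (simp add: P_def)
  have "N a = 0 \<longleftrightarrow> (\<forall>p\<in>P. \<not> p dvd a)" for a
    using \<open>finite P\<close> by (auto simp: N_def)
  then have "{a \<in> A. rough z a} = {a \<in> R. N a = 0}"
    using assms(3) by (auto simp: R_def P_def rough_iff_rough_and_no_prime_divisor_between)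
  then have "real (sift A z) = (\<Sum>a\<in>R. of_bool (N a = 0))"
    using \<open>finite R\<close> by (simp add: sift_eq_card_rough Int_def)
  also have "\<dots> \<le> real (card R) - (m1 + m2 - 1) / (m1 * m2) * (\<Sum>a\<in>R. real (N a))
      + 2 / (m1 * m2) * (\<Sum>a\<in>R. real (N a) * (real (N a) - 1) / 2)"
    by (rule U_set_sieve_weight_sum[OF assms(4)])
  also have "(\<Sum>a\<in>R. real (N a)) = (\<Sum>p\<in>P. real (sift (sieve_sub A p) w))"
    unfolding N_def R_def by (rule sum_sift_sieve_sub_primes[OF assms(1) \<open>finite P\<close> prime_P, symmetric])
  also have "(\<Sum>a\<in>R. real (N a) * (real (N a) - 1) / 2)
      = (\<Sum>(p1, p2)\<in>{(p1, p2). p1 \<in> P \<and> p2 \<in> P \<and> p2 < p1}. real (sift (sieve_sub A (p1 * p2)) w))"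
    unfolding N_def R_def by (rule sum_sift_sieve_sub_prime_pairs[OF assms(1) \<open>finite P\<close> prime_P, symmetric])
  also have "{(p1, p2). p1 \<in> P \<and> p2 \<in> P \<and> p2 < p1}
      = {(p1, p2). prime p1 \<and> prime p2 \<and> w \<le> real p2 \<and> p2 < p1 \<and> real p1 < z}"
    by (auto simp: P_def)
  finally show ?thesis
    by (simp add: sift_eq_card_rough R_def P_def)
qed

end
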